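(* Let $\mathbf p$ be a map with simple boundary having $f$ interior faces, and let $v$ be the maximal valency of an interior face of $\mathbf p$. Then in any rooted planar map $\mathbf m$, every occurrence of $\mathbf p$ intersects at most $vf^2$ other occurrences of $\mathbf p$.
   Context: A planar map is a connected planar multigraph (loops and multiple edges allowed) embedded in the sphere. It is rooted if one edge is oriented, and the root face is the face to the left of the root edge. The valency of a face is the number of incident edges, bridges counted twice. A map with simple boundary is a rooted planar map whose root face is bounded by a cycle. Its other faces are interior faces. An occurrence of $\mathbf p$ in $\mathbf m$ is given by a cycle $C$ of $\mathbf m$ such that the closed region bounded by $C$ on the side not containing the root face of $\mathbf m$, with all vertices and edges inside, forms a map isomorphic to $\mathbf p$ with $C$ corresponding to the root face boundary of $\mathbf p$. The isomorphism must preserve the root face, not necessarily the root edge, and occurrences are identified with their set of interior faces. Two occurrences intersect if they share an interior face. *)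

theory Defs
  imports "HOL-Combinatorics.Orbits"
begin

text \<open>Combinatorial (rotation-system) encoding of rooted maps.\<close>

record 'd cmap =
  darts :: "'d set"
  alpha :: "'d \<Rightarrow> 'd"
  sigma :: "'d \<Rightarrow> 'd"
  root  :: 'd

definition phi :: "'d cmap \<Rightarrow> 'd \<Rightarrow> 'd" where
  "phi M = sigma M \<circ> alpha M"

definition vertices :: "'d cmap \<Rightarrow> 'd set set" where
  "vertices M = (\<lambda>x. orbit (sigma M) x) ` darts M"

definition edges :: "'d cmap \<Rightarrow> 'd set set" where
  "edges M = (\<lambda>x. orbit (alpha M) x) ` darts M"

definition faces :: "'d cmap \<Rightarrow> 'd set set" where
  "faces M = (\<lambda>x. orbit (phi M) x) ` darts M"

definition root_face :: "'d cmap \<Rightarrow> 'd set" where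
  "root_face M = orbit (phi M) (root M)"

definition interior_faces :: "'d cmap \<Rightarrow> 'd set set" where
  "interior_faces M = faces M - {root_face M}"

text \<open>Valency of a face = number of darts in it (bridges are counted twice).\<close>
definition valency :: "'d set \<Rightarrow> nat" where
  "valency F = card F"

definition connected_map :: "'d cmap \<Rightarrow> bool" where
  "connected_map M \<longleftrightarrow>
     (\<forall>x\<in>darts M. \<forall>y\<in>darts M.
        (x, y) \<in> {(a, b). a \<in> darts M \<and> (b = alpha M a \<or> b = sigma M a)}\<^sup>*)"

definition rooted_map :: "'d cmap \<Rightarrow> bool" where
  "rooted_map M \<longleftrightarrow>
     finite (darts M) \<and> root M \<in> darts M \<and>
     alpha M permutes darts M \<and> sigma M permutes darts M \<and>
     (\<forall>x\<in>darts M. alpha M (alpha M x) = x \<and> alpha M x \<noteq> x) \<and>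
     connected_map M"

definition rooted_planar_map :: "'d cmap \<Rightarrow> bool" where
  "rooted_planar_map M \<longleftrightarrow> rooted_map M \<and>
     int (card (vertices M)) - int (card (edges M)) + int (card (faces M)) = 2"

text \<open>Simple boundary: the root face is bounded by a cycle, i.e. its darts have
  pairwise distinct base vertices and no edge is traversed twice by it.\<close>
definition simple_boundary :: "'d cmap \<Rightarrow> bool" where
  "simple_boundary P \<longleftrightarrow> rooted_planar_map P \<and>
     (\<forall>r\<in>root_face P. alpha P r \<notin> root_face P) \<and>
     inj_on (\<lambda>r. orbit (sigma P) r) (root_face P)"

text \<open>An embedding of P (map with simple boundary) into M as an occurrence:
  an injective dart map commuting with the edge involution everywhere and with the
  face permutation on all darts of interior faces of P, sending distinct vertices
  of P to distinct vertices of M (so the image of the boundary is a cycle C of M),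
  and not covering the root face of M (the region is the side of C not containing
  the root face).\<close>
definition occ_embedding :: "'a cmap \<Rightarrow> 'b cmap \<Rightarrow> ('a \<Rightarrow> 'b) \<Rightarrow> bool" where
  "occ_embedding P M \<psi> \<longleftrightarrow>
     \<psi> ` darts P \<subseteq> darts M \<and>
     inj_on \<psi> (darts P) \<and>
     (\<forall>x\<in>darts P. \<psi> (alpha P x) = alpha M (\<psi> x)) \<and>
     (\<forall>x\<in>darts P - root_face P. \<psi> (phi P x) = phi M (\<psi> x)) \<and>
     (\<forall>x\<in>darts P. \<forall>y\<in>darts P.
        orbit (sigma M) (\<psi> x) = orbit (sigma M) (\<psi> y) \<longrightarrow>
        orbit (sigma P) x = orbit (sigma P) y) \<and>
     root M \<notin> \<psi> ` (darts P - root_face P)"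

text \<open>Occurrences, identified with their set of interior faces (faces of M).\<close>
definition occurrences :: "'a cmap \<Rightarrow> 'b cmap \<Rightarrow> 'b set set set" where
  "occurrences P M =
     {(\<lambda>x. orbit (phi M) (\<psi> x)) ` (darts P - root_face P) | \<psi>. occ_embedding P M \<psi>}"

end

theory Submission
  imports Defs
begin

text \<open>An occurrence is rigid: two embeddings of \<open>P\<close> that agree on one interior dart agree
  on all interior darts.  Agreement spreads along edges, and around each vertex of \<open>P\<close>
  through every corner except the one lying in the outer face, which a simple boundary meets
  at most once per vertex; connectivity of \<open>P\<close> does the rest.  So if an occurrence \<open>Q'\<close>
  shares a face with \<open>Q\<close>, fix a representative dart in every interior face of \<open>P\<close>; the
  representative of the face of \<open>P\<close> mapped onto the shared face is sent into that face, hence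
  to the image under the embedding of \<open>Q\<close> of one of its at most \<open>v f\<close> interior darts.  The
  pair (face of \<open>P\<close>, dart of \<open>P\<close>) determines \<open>Q'\<close>, giving at most \<open>f \<cdot> v f\<close> choices.\<close>

lemma orbit_eq_if_in_orbit:
  assumes "permutation f" "t \<in> orbit f s"
  shows "orbit f t = orbit f s"
  using orbit_cyclic_eq3[OF cyclic_on_orbit'[OF assms(1)] assms(2)] .

lemma orbit_invariant_except_one_step:
  assumes f: "permutation f"
    and step: "\<And>z. z \<in> orbit f x \<Longrightarrow> z \<noteq> y \<Longrightarrow> g (f z) \<longleftrightarrow> g z"
    and a: "a \<in> orbit f x" and b: "b \<in> orbit f x" and "g a"
  shows "g b"
proof -
  \<comment> \<open>Started just after the exceptional point \<open>y\<close>, the walk crosses \<open>y \<mapsto> f y\<close>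
    only when wrapping around to its start.\<close>
  define z0 where "z0 = (if y \<in> orbit f x then f y else x)"
  have z0: "z0 \<in> orbit f x"
    using permutation_self_in_orbit[OF f] by (auto simp: z0_def intro: orbit.step)
  have "g ((f ^^ n) z0) \<longleftrightarrow> g z0" for n
  proof (induction n)
    case (Suc n)
    show ?case
    proof (cases "(f ^^ n) z0 = y")
      case True
      then have "y \<in> orbit f x" using funpow_in_orbit[OF z0] by metis
      then show ?thesis using True by (simp add: z0_def)
    next
      case False
      then show ?thesis using Suc step[OF funpow_in_orbit[OF z0]] by simp
    qed
  qed simp
  moreover have "orbit f x = {(f ^^ n) z0 | n. True}"
    using orbit_eq_if_in_orbit[OF f z0] orbit_altdef_permutation[OF f] by metis
  ultimately show ?thesis using a b \<open>g a\<close> by auto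
qed

lemma phi_permutes: "rooted_map M \<Longrightarrow> phi M permutes darts M"
  unfolding rooted_map_def phi_def by (auto intro: permutes_compose)

lemma phi_permutation: "rooted_map M \<Longrightarrow> permutation (phi M)"
  using phi_permutes by (auto simp: rooted_map_def intro: permutes_imp_permutation)

lemma sigma_permutation: "rooted_map M \<Longrightarrow> permutation (sigma M)"
  unfolding rooted_map_def by (auto intro: permutes_imp_permutation)

lemma sigma_eq_phi_alpha: "rooted_map M \<Longrightarrow> x \<in> darts M \<Longrightarrow> sigma M x = phi M (alpha M x)"
  unfolding rooted_map_def phi_def by auto

abbreviation interior_darts :: "'d cmap \<Rightarrow> 'd set" where
  "interior_darts P \<equiv> darts P - root_face P"

lemma orbit_phi_eq_root_face_iff:
  assumes "rooted_map P"
  shows "orbit (phi P) x = root_face P \<longleftrightarrow> x \<in> root_face P"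
  using orbit_eq_if_in_orbit permutation_self_in_orbit phi_permutation[OF assms]
  unfolding root_face_def by metis

lemma phi_in_root_face_iff:
  assumes "rooted_map M"
  shows "phi M x \<in> root_face M \<longleftrightarrow> x \<in> root_face M"
  using orbit_phi_eq_root_face_iff[OF assms] permutation_orbit_step[OF phi_permutation[OF assms]]
  by metis

lemma simple_boundary_rooted_map: "simple_boundary P \<Longrightarrow> rooted_map P"
  unfolding simple_boundary_def rooted_planar_map_def by blast

lemma simple_boundary_vertex_enters_root_face_once:
  assumes "simple_boundary P" "z \<in> orbit (sigma P) d" "z' \<in> orbit (sigma P) d"
    and "sigma P z \<in> root_face P" "sigma P z' \<in> root_face P"
  shows "z = z'"
proof -
  have s: "permutation (sigma P)" using sigma_permutation simple_boundary_rooted_map assms(1) by blast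
  have "orbit (sigma P) (sigma P z) = orbit (sigma P) (sigma P z')"
    using orbit_eq_if_in_orbit[OF s] assms(2,3) by (simp add: permutation_orbit_step[OF s])
  then have "sigma P z = sigma P z'"
    using assms(1,4,5) unfolding simple_boundary_def by (auto dest: inj_onD)
  then show ?thesis using permutation_permutes[of "sigma P"] s permutes_inj inj_eq by metis
qed

text \<open>An embedding only commutes with the face permutation on interior darts, so a
  boundary dart is compared through its opposite dart, which is interior when the boundary
  is simple.\<close>
definition embeddings_agree_at :: "'a cmap \<Rightarrow> ('a \<Rightarrow> 'b) \<Rightarrow> ('a \<Rightarrow> 'b) \<Rightarrow> 'a \<Rightarrow> bool" where
  "embeddings_agree_at P \<psi>1 \<psi>2 d \<longleftrightarrow>
     (if d \<in> root_face P then \<psi>1 (alpha P d) = \<psi>2 (alpha P d) else \<psi>1 d = \<psi>2 d)"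

context
  fixes P :: "'a cmap" and M :: "'b cmap" and \<psi>1 \<psi>2 :: "'a \<Rightarrow> 'b"
  assumes P: "simple_boundary P" and M: "rooted_map M"
    and \<psi>1: "occ_embedding P M \<psi>1" and \<psi>2: "occ_embedding P M \<psi>2"
begin

private abbreviation "agree \<equiv> embeddings_agree_at P \<psi>1 \<psi>2"

private lemma rooted_P: "rooted_map P"
  using simple_boundary_rooted_map[OF P] .

private lemma alpha_commute:
  "d \<in> darts P \<Longrightarrow> \<psi>1 (alpha P d) = alpha M (\<psi>1 d) \<and> \<psi>2 (alpha P d) = alpha M (\<psi>2 d)"
  using \<psi>1 \<psi>2 unfolding occ_embedding_def by blast

private lemma phi_commute:
  "d \<in> interior_darts P \<Longrightarrow> \<psi>1 (phi P d) = phi M (\<psi>1 d) \<and> \<psi>2 (phi P d) = phi M (\<psi>2 d)"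
  using \<psi>1 \<psi>2 unfolding occ_embedding_def by blast

lemma embeddings_agree_at_alpha:
  assumes "d \<in> darts P" "agree d"
  shows "agree (alpha P d)"
proof -
  have inv: "alpha P (alpha P d) = d" using rooted_P assms(1) unfolding rooted_map_def by blast
  have "alpha P d \<notin> root_face P" if "d \<in> root_face P"
    using P that unfolding simple_boundary_def by blast
  moreover have "\<psi>1 (alpha P d) = \<psi>2 (alpha P d)" if "\<psi>1 d = \<psi>2 d"
    using that alpha_commute[OF assms(1)] by simp
  ultimately show ?thesis
    using assms(2) inv unfolding embeddings_agree_at_def by (cases "d \<in> root_face P") auto
qed

lemma embeddings_agree_at_sigma_iff:
  assumes y: "y \<in> darts P" "sigma P y \<notin> root_face P"
  shows "agree (sigma P y) \<longleftrightarrow> agree y"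
proof -
  define a where "a = alpha P y"
  have a: "a \<in> darts P" using rooted_P y(1) permutes_in_image
    unfolding rooted_map_def a_def by metis
  have sy: "sigma P y = phi P a" using sigma_eq_phi_alpha[OF rooted_P y(1)] a_def by simp
  then have aR: "a \<notin> root_face P" using phi_in_root_face_iff[OF rooted_P] y(2) by simp
  have injM: "inj (phi M)" "inj (alpha M)"
    using M phi_permutes permutes_inj unfolding rooted_map_def by blast+
  have "agree (sigma P y) \<longleftrightarrow> \<psi>1 (phi P a) = \<psi>2 (phi P a)"
    using y(2) sy unfolding embeddings_agree_at_def by simp
  also have "\<dots> \<longleftrightarrow> \<psi>1 a = \<psi>2 a"
    using phi_commute a aR injM(1) by (simp add: inj_eq)
  also have "\<dots> \<longleftrightarrow> agree y"
    using alpha_commute[OF y(1)] injM(2) unfolding embeddings_agree_at_def a_def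
    by (cases "y \<in> root_face P") (simp_all add: inj_eq)
  finally show ?thesis .
qed

text \<open>Around a vertex of \<open>P\<close> the rotation leaves the interior at most once, and the
  previous lemma lets agreement pass every other step of the rotation.\<close>
lemma embeddings_agree_at_sigma:
  assumes d: "d \<in> darts P" "agree d"
  shows "agree (sigma P d)"
proof -
  have s: "permutation (sigma P)" using sigma_permutation[OF rooted_P] .
  have orbit_darts: "orbit (sigma P) d \<subseteq> darts P"
    using permutes_orbit_subset[OF _ d(1)] rooted_P by (simp add: rooted_map_def)
  obtain y0 where y0: "\<And>z. z \<in> orbit (sigma P) d \<Longrightarrow> sigma P z \<in> root_face P \<Longrightarrow> z = y0"
  proof (cases "\<exists>z\<in>orbit (sigma P) d. sigma P z \<in> root_face P")
    case True
    then obtain z1 where "z1 \<in> orbit (sigma P) d" "sigma P z1 \<in> root_face P" by blast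
    then show ?thesis
      using that[of z1] simple_boundary_vertex_enters_root_face_once[OF P] by presburger
  qed (use that[of d] in blast)
  have step: "agree (sigma P z) \<longleftrightarrow> agree z" if "z \<in> orbit (sigma P) d" "z \<noteq> y0" for z
  proof (rule embeddings_agree_at_sigma_iff)
    show "z \<in> darts P" using that(1) orbit_darts by blast
    show "sigma P z \<notin> root_face P" using that y0 by blast
  qed
  show ?thesis
    using orbit_invariant_except_one_step[where g = agree, OF s step
        permutation_self_in_orbit[OF s] orbit.base[of "sigma P" d] d(2)] .
qed

theorem occ_embedding_unique:
  assumes x0: "x0 \<in> interior_darts P" "\<psi>1 x0 = \<psi>2 x0"
    and x: "x \<in> interior_darts P"
  shows "\<psi>1 x = \<psi>2 x"
proof -
  let ?E = "{(a, b). a \<in> darts P \<and> (b = alpha P a \<or> b = sigma P a)}"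
  have "(x0, x) \<in> ?E\<^sup>*"
  proof -
    have "connected_map P" using rooted_P by (simp add: rooted_map_def)
    then show ?thesis using x0(1) x unfolding connected_map_def by blast
  qed
  then have "agree x"
  proof (induction rule: rtrancl_induct)
    case base
    then show ?case using x0 unfolding embeddings_agree_at_def by simp
  next
    case (step a b)
    then show ?case using embeddings_agree_at_alpha embeddings_agree_at_sigma by blast
  qed
  then show ?thesis using x unfolding embeddings_agree_at_def by simp
qed

end

definition occurrence_of :: "'a cmap \<Rightarrow> 'b cmap \<Rightarrow> ('a \<Rightarrow> 'b) \<Rightarrow> 'b set set" where
  "occurrence_of P M \<psi> = (\<lambda>x. orbit (phi M) (\<psi> x)) ` interior_darts P"

lemma occurrences_eq: "occurrences P M = {occurrence_of P M \<psi> | \<psi>. occ_embedding P M \<psi>}"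
  unfolding occurrences_def occurrence_of_def ..

lemma orbit_phi_subset_interior_darts:
  assumes P: "rooted_map P" and x: "x \<in> interior_darts P"
  shows "orbit (phi P) x \<subseteq> interior_darts P"
proof
  fix y assume y: "y \<in> orbit (phi P) x"
  then have "y \<in> darts P" using permutes_orbit_subset[OF phi_permutes[OF P]] x by blast
  moreover have "y \<notin> root_face P"
    using x orbit_eq_if_in_orbit[OF phi_permutation[OF P] y] orbit_phi_eq_root_face_iff[OF P]
    by (metis DiffD2)
  ultimately show "y \<in> interior_darts P" by blast
qed

lemma occ_embedding_image_orbit:
  assumes P: "rooted_map P" and M: "rooted_map M" and \<psi>: "occ_embedding P M \<psi>"
    and x: "x \<in> interior_darts P"
  shows "\<psi> ` orbit (phi P) x = orbit (phi M) (\<psi> x)"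
proof -
  have "\<psi> (((phi P) ^^ n) x) = ((phi M) ^^ n) (\<psi> x)" for n
  proof (induction n)
    case (Suc n)
    have "((phi P) ^^ n) x \<in> interior_darts P"
      using orbit_phi_subset_interior_darts[OF P x]
        funpow_in_orbit[OF permutation_self_in_orbit[OF phi_permutation[OF P]]] by blast
    then show ?case using Suc \<psi> unfolding occ_embedding_def by simp
  qed simp
  then show ?thesis
    unfolding orbit_altdef_permutation[OF phi_permutation[OF P]]
      orbit_altdef_permutation[OF phi_permutation[OF M]] by (auto simp: image_iff) metis
qed

lemma interior_faces_eq:
  assumes "rooted_map P"
  shows "interior_faces P = (\<lambda>x. orbit (phi P) x) ` interior_darts P"
  using orbit_phi_eq_root_face_iff[OF assms]
  unfolding interior_faces_def faces_def by blast

lemma finite_interior_faces: "rooted_map P \<Longrightarrow> finite (interior_faces P)"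
  unfolding interior_faces_def faces_def rooted_map_def by simp

lemma interior_face_rep:
  assumes P: "rooted_map P" and G: "G \<in> interior_faces P"
  shows "(SOME x. x \<in> G) \<in> interior_darts P"
proof -
  obtain x where x: "x \<in> interior_darts P" "G = orbit (phi P) x"
    using G unfolding interior_faces_eq[OF P] by blast
  have "(SOME y. y \<in> G) \<in> G" unfolding some_in_eq x(2) by (rule orbit_nonempty)
  then show ?thesis using orbit_phi_subset_interior_darts[OF P x(1)] x(2) by blast
qed

lemma card_interior_darts_le:
  assumes P: "rooted_map P"
  shows "card (interior_darts P) \<le> card (interior_faces P) * Max (valency ` interior_faces P)"
proof -
  have fin: "finite (interior_faces P)" using finite_interior_faces[OF P] .
  have "interior_darts P \<subseteq> \<Union> (interior_faces P)"
    using interior_faces_eq[OF P] permutation_self_in_orbit[OF phi_permutation[OF P]] by blast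
  moreover have "finite (\<Union> (interior_faces P))"
    using P unfolding interior_faces_def faces_def rooted_map_def
    by (auto intro: finite_subset[OF permutes_orbit_subset[OF phi_permutes[OF P]]])
  ultimately have "card (interior_darts P) \<le> card (\<Union> (interior_faces P))"
    by (rule card_mono[rotated])
  also have "\<dots> \<le> (\<Sum>G\<in>interior_faces P. card G)" by (rule card_Union_le_sum_card)
  also have "\<dots> \<le> card (interior_faces P) * Max (valency ` interior_faces P)"
  proof -
    have "card G \<le> Max (valency ` interior_faces P)" if "G \<in> interior_faces P" for G
      using fin that by (simp add: valency_def)
    then show ?thesis using sum_bounded_above[of "interior_faces P" card] by simp
  qed
  finally show ?thesis .
qed

lemma occurrences_meet_at_face_rep:
  assumes P: "rooted_map P" and M: "rooted_map M"
    and \<psi>: "occ_embedding P M \<psi>" and \<psi>0: "occ_embedding P M \<psi>0"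
    and meet: "occurrence_of P M \<psi> \<inter> occurrence_of P M \<psi>0 \<noteq> {}"
  shows "\<exists>G\<in>interior_faces P. \<exists>x\<in>interior_darts P. \<psi> (SOME y. y \<in> G) = \<psi>0 x"
proof -
  obtain x1 x2 where x1: "x1 \<in> interior_darts P" and x2: "x2 \<in> interior_darts P"
    and F: "orbit (phi M) (\<psi> x1) = orbit (phi M) (\<psi>0 x2)"
    using meet unfolding occurrence_of_def by (auto simp del: Diff_iff)
  define G where "G = orbit (phi P) x1"
  have G: "G \<in> interior_faces P"
    unfolding interior_faces_eq[OF P] G_def using x1 by (rule imageI)
  have "(SOME y. y \<in> G) \<in> G" unfolding some_in_eq G_def by (rule orbit_nonempty)
  then have "\<psi> (SOME y. y \<in> G) \<in> \<psi> ` orbit (phi P) x1" by (simp add: G_def)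
  also have "\<dots> = \<psi>0 ` orbit (phi P) x2"
    using occ_embedding_image_orbit[OF P M \<psi> x1] occ_embedding_image_orbit[OF P M \<psi>0 x2] F
    by simp
  finally have "\<psi> (SOME y. y \<in> G) \<in> \<psi>0 ` orbit (phi P) x2" .
  then obtain x where "x \<in> orbit (phi P) x2" "\<psi> (SOME y. y \<in> G) = \<psi>0 x" by blast
  then show ?thesis using G orbit_phi_subset_interior_darts[OF P x2] by blast
qed

lemma occurrences_meeting_encoding:
  assumes P: "simple_boundary P" and M: "rooted_map M" and \<psi>0: "occ_embedding P M \<psi>0"
  defines "T \<equiv> {Q' \<in> occurrences P M. Q' \<inter> occurrence_of P M \<psi>0 \<noteq> {}}"
  shows "\<exists>h. inj_on h T \<and> h ` T \<subseteq> interior_faces P \<times> interior_darts P"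
proof -
  have rP: "rooted_map P" using simple_boundary_rooted_map[OF P] .
  define code where "code Q' p \<longleftrightarrow> p \<in> interior_faces P \<times> interior_darts P \<and>
      (\<exists>\<psi>. occ_embedding P M \<psi> \<and> Q' = occurrence_of P M \<psi> \<and> \<psi> (SOME y. y \<in> fst p) = \<psi>0 (snd p))"
    for Q' p
  have "\<exists>p. code Q' p" if "Q' \<in> T" for Q'
    using that occurrences_meet_at_face_rep[OF rP M _ \<psi>0]
    unfolding T_def occurrences_eq code_def by fastforce
  then obtain h where h: "\<And>Q'. Q' \<in> T \<Longrightarrow> code Q' (h Q')" by metis
  have "inj_on h T"
  proof (rule inj_onI)
    fix Q1 Q2 assume Q: "Q1 \<in> T" "Q2 \<in> T" "h Q1 = h Q2"
    obtain \<psi>1 \<psi>2 where \<psi>12: "occ_embedding P M \<psi>1" "occ_embedding P M \<psi>2"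
      and Q12: "Q1 = occurrence_of P M \<psi>1" "Q2 = occurrence_of P M \<psi>2"
      and eq: "\<psi>1 (SOME y. y \<in> fst (h Q1)) = \<psi>2 (SOME y. y \<in> fst (h Q1))"
      and rep: "(SOME y. y \<in> fst (h Q1)) \<in> interior_darts P"
      using h[OF Q(1)] h[OF Q(2)] Q(3) interior_face_rep[OF rP] unfolding code_def by auto
    have "\<psi>1 x = \<psi>2 x" if "x \<in> interior_darts P" for x
      using occ_embedding_unique[OF P M \<psi>12 rep eq that] .
    then show "Q1 = Q2" unfolding Q12 occurrence_of_def by auto
  qed
  moreover have "h ` T \<subseteq> interior_faces P \<times> interior_darts P"
    using h unfolding code_def by blast
  ultimately show ?thesis by blast
qed

theorem mainTheorem6:
  fixes P :: "'a cmap" and M :: "'b cmap"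
  assumes "simple_boundary P"
    and "rooted_planar_map M"
    and "Q \<in> occurrences P M"
  shows "card {Q' \<in> occurrences P M. Q' \<noteq> Q \<and> Q' \<inter> Q \<noteq> {}}
           \<le> Max (valency ` interior_faces P) * (card (interior_faces P))\<^sup>2"
proof -
  have rP: "rooted_map P" using simple_boundary_rooted_map[OF assms(1)] .
  have rM: "rooted_map M" using assms(2) unfolding rooted_planar_map_def by blast
  obtain \<psi>0 where \<psi>0: "occ_embedding P M \<psi>0" and Q: "Q = occurrence_of P M \<psi>0"
    using assms(3) unfolding occurrences_eq by blast
  let ?T = "{Q' \<in> occurrences P M. Q' \<noteq> Q \<and> Q' \<inter> Q \<noteq> {}}"
  let ?C = "interior_faces P \<times> interior_darts P"
  let ?T' = "{Q' \<in> occurrences P M. Q' \<inter> Q \<noteq> {}}"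
  obtain h where h': "inj_on h ?T'" "h ` ?T' \<subseteq> ?C"
    using occurrences_meeting_encoding[OF assms(1) rM \<psi>0] unfolding Q[symmetric] by blast
  have T: "?T \<subseteq> ?T'" by blast
  have h: "inj_on h ?T" "h ` ?T \<subseteq> ?C"
    using inj_on_subset[OF h'(1) T] h'(2) T by blast+
  have "finite ?C"
    using finite_interior_faces[OF rP] rP unfolding rooted_map_def by simp
  then have "card ?T \<le> card (interior_faces P) * card (interior_darts P)"
    using card_inj_on_le[OF h] by (simp add: card_cartesian_product)
  also have "\<dots> \<le> card (interior_faces P) * (card (interior_faces P) * Max (valency ` interior_faces P))"
    using card_interior_darts_le[OF rP] by simp
  finally show ?thesis by (simp add: power2_eq_square ac_simps)
qed

end
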